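(* Let $G$ be a graph and let $H$ be a triangle-free subgraph of $G$ such that every maximal clique of $H$ is a maximal clique of $G$. Then $p(G) \ge p(H)$.
   Context: All graphs are finite and simple. For an acyclic digraph $D$, the phylogeny graph $P(D)$ is the graph on $V(D)$ in which distinct vertices $u,v$ are adjacent if and only if $(u,v)\in A(D)$, or $(v,u)\in A(D)$, or there is a vertex $w$ with $(u,w),(v,w)\in A(D)$. A phylogeny digraph for a graph $G$ is an acyclic digraph $D$ such that $G$ is an induced subgraph of $P(D)$ and $D$ has no arc from a vertex of $V(D)\setminus V(G)$ to a vertex of $V(G)$. The phylogeny number $p(G)$ is the minimum of $|V(D)\setminus V(G)|$ over all phylogeny digraphs $D$ for $G$. *)

theory Defs
  imports Main
begin

definition graph :: "'a set \<Rightarrow> 'a set set \<Rightarrow> bool" where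
  "graph V E \<longleftrightarrow> finite V \<and> (\<forall>e\<in>E. \<exists>u v. e = {u, v} \<and> u \<noteq> v \<and> u \<in> V \<and> v \<in> V)"

definition subgraph :: "'a set \<Rightarrow> 'a set set \<Rightarrow> 'a set \<Rightarrow> 'a set set \<Rightarrow> bool" where
  "subgraph VH EH VG EG \<longleftrightarrow> graph VH EH \<and> graph VG EG \<and> VH \<subseteq> VG \<and> EH \<subseteq> EG"

definition clique :: "'a set \<Rightarrow> 'a set set \<Rightarrow> 'a set \<Rightarrow> bool" where
  "clique V E K \<longleftrightarrow> K \<subseteq> V \<and> (\<forall>u\<in>K. \<forall>v\<in>K. u \<noteq> v \<longrightarrow> {u, v} \<in> E)"

definition maximal_clique :: "'a set \<Rightarrow> 'a set set \<Rightarrow> 'a set \<Rightarrow> bool" where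
  "maximal_clique V E K \<longleftrightarrow> clique V E K \<and> (\<forall>K'. clique V E K' \<and> K \<subseteq> K' \<longrightarrow> K' = K)"

definition triangle_free :: "'a set \<Rightarrow> 'a set set \<Rightarrow> bool" where
  "triangle_free V E \<longleftrightarrow> \<not> (\<exists>u\<in>V. \<exists>v\<in>V. \<exists>w\<in>V. u \<noteq> v \<and> v \<noteq> w \<and> u \<noteq> w \<and>
       {u, v} \<in> E \<and> {v, w} \<in> E \<and> {u, w} \<in> E)"

definition phylo_adj :: "'b set \<Rightarrow> 'b rel \<Rightarrow> 'b \<Rightarrow> 'b \<Rightarrow> bool" where
  "phylo_adj VD A u v \<longleftrightarrow> u \<noteq> v \<and> u \<in> VD \<and> v \<in> VD \<and>
     ((u, v) \<in> A \<or> (v, u) \<in> A \<or> (\<exists>w\<in>VD. (u, w) \<in> A \<and> (v, w) \<in> A))"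

text \<open>Its vertex set is
  Inl ` V (the vertices of G) together with a finite set Inr ` S of new vertices;
  every finite digraph containing V(G) is isomorphic to one of this form.\<close>
definition phylogeny_digraph :: "'a set \<Rightarrow> 'a set set \<Rightarrow> nat set \<Rightarrow> ('a + nat) rel \<Rightarrow> bool" where
  "phylogeny_digraph V E S A \<longleftrightarrow>
     finite S \<and>
     A \<subseteq> (Inl ` V \<union> Inr ` S) \<times> (Inl ` V \<union> Inr ` S) \<and>
     acyclic A \<and>
     (\<forall>u\<in>V. \<forall>v\<in>V. u \<noteq> v \<longrightarrow>
        ({u, v} \<in> E \<longleftrightarrow> phylo_adj (Inl ` V \<union> Inr ` S) A (Inl u) (Inl v))) \<and>
     (\<forall>x\<in>S. \<forall>v\<in>V. (Inr x, Inl v) \<notin> A)"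

definition phylogeny_number :: "'a set \<Rightarrow> 'a set set \<Rightarrow> nat" where
  "phylogeny_number V E = (LEAST k. \<exists>S A. phylogeny_digraph V E S A \<and> card S = k)"

end

theory Submission
  imports Defs
begin

text \<open>In a triangle-free graph every edge is a maximal clique. Under the hypothesis it is then
  a maximal clique of \<open>G\<close> as well, so no vertex of \<open>G\<close> is adjacent to both ends of an edge
  of \<open>H\<close>. An edge \<open>uv\<close> of \<open>H\<close> can never be produced in \<open>D\<close> by a common
  old out-neighbour, and if it is produced by a common new out-neighbour \<open>s\<close>, then \<open>u, v\<close> are
  the only in-neighbours of \<open>s\<close>; so the surviving arcs still produce exactly the edges of \<open>H\<close>,
  giving a phylogeny digraph for \<open>H\<close> with the same new vertices.\<close>

lemma graph_edge_vertices:
  assumes "graph V E" and "{u, v} \<in> E"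
  shows "u \<in> V" and "v \<in> V"
  using assms unfolding graph_def by (metis doubleton_eq_iff)+

lemma graph_edge_distinct:
  assumes "graph V E" and "{u, v} \<in> E"
  shows "u \<noteq> v"
  using assms unfolding graph_def by (metis doubleton_eq_iff insert_absorb2)

lemma maximal_clique_pair_no_common_neighbour:
  assumes mc: "maximal_clique V E {a, b}"
    and "c \<in> V" and "{a, c} \<in> E" and "{b, c} \<in> E"
  shows "c = a \<or> c = b"
proof -
  have "{a, b} \<subseteq> V" "\<forall>u\<in>{a, b}. \<forall>v\<in>{a, b}. u \<noteq> v \<longrightarrow> {u, v} \<in> E"
    using mc unfolding maximal_clique_def clique_def by auto
  then have "clique V E {a, b, c}"
    using assms(2-4) unfolding clique_def by (auto simp: insert_commute)
  then have "{a, b, c} = {a, b}"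
    using mc unfolding maximal_clique_def by blast
  then show ?thesis by blast
qed

lemma triangle_freeD:
  assumes "triangle_free V E" and "u \<in> V" "v \<in> V" "w \<in> V" and "u \<noteq> v" "v \<noteq> w" "u \<noteq> w"
    and "{u, v} \<in> E" "{v, w} \<in> E" "{u, w} \<in> E"
  shows False
  using assms unfolding triangle_free_def by blast

lemma triangle_free_edge_maximal_clique:
  assumes g: "graph V E" and tf: "triangle_free V E" and ab: "{a, b} \<in> E"
  shows "maximal_clique V E {a, b}"
  unfolding maximal_clique_def
proof (intro conjI allI impI)
  have V: "a \<in> V" "b \<in> V" using graph_edge_vertices[OF g ab] .
  then show "clique V E {a, b}"
    using ab unfolding clique_def by (auto simp: insert_commute)
  fix K assume K: "clique V E K \<and> {a, b} \<subseteq> K"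
  show "K = {a, b}"
  proof (rule ccontr)
    assume "K \<noteq> {a, b}"
    then obtain c where c: "c \<in> K" "c \<noteq> a" "c \<noteq> b" using K by blast
    have "{a, c} \<in> E" "{b, c} \<in> E" "c \<in> V"
      using K c unfolding clique_def by auto
    with triangle_freeD[OF tf V(1,2) \<open>c \<in> V\<close> graph_edge_distinct[OF g ab]] c ab
    show False by (auto simp: insert_commute)
  qed
qed

lemma edge_no_common_neighbour:
  assumes sub: "subgraph VH EH VG EG"
    and tf: "triangle_free VH EH"
    and mc: "\<forall>K. maximal_clique VH EH K \<longrightarrow> maximal_clique VG EG K"
    and ab: "{a, b} \<in> EH" and "c \<in> VG" and "{a, c} \<in> EG" and "{b, c} \<in> EG"
  shows "c = a \<or> c = b"
proof -
  have "graph VH EH" using sub unfolding subgraph_def by blast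
  then have "maximal_clique VG EG {a, b}"
    using mc triangle_free_edge_maximal_clique[OF _ tf ab] by blast
  then show ?thesis by (rule maximal_clique_pair_no_common_neighbour[OF _ assms(5-7)])
qed

lemma phylogeny_digraph_arc_vertices:
  assumes "phylogeny_digraph V E S A" and "(p, q) \<in> A"
  shows "p \<in> Inl ` V \<union> Inr ` S" and "q \<in> Inl ` V \<union> Inr ` S"
  using assms unfolding phylogeny_digraph_def by blast+

lemma phylogeny_digraph_no_loop:
  assumes "phylogeny_digraph V E S A"
  shows "(p, p) \<notin> A"
proof
  assume "(p, p) \<in> A"
  then have "(p, p) \<in> A\<^sup>+" by blast
  with assms show False unfolding phylogeny_digraph_def acyclic_def by blast
qed

lemma phylogeny_digraph_adj_iff:
  assumes pd: "phylogeny_digraph V E S A" and uv: "u \<in> V" "v \<in> V" "u \<noteq> v"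
  shows "{u, v} \<in> E \<longleftrightarrow> (Inl u, Inl v) \<in> A \<or> (Inl v, Inl u) \<in> A \<or>
                        (\<exists>w. (Inl u, w) \<in> A \<and> (Inl v, w) \<in> A)"
proof -
  have "{u, v} \<in> E \<longleftrightarrow> phylo_adj (Inl ` V \<union> Inr ` S) A (Inl u) (Inl v)"
    using pd uv unfolding phylogeny_digraph_def by blast
  also have "\<dots> \<longleftrightarrow> (Inl u, Inl v) \<in> A \<or> (Inl v, Inl u) \<in> A \<or>
                        (\<exists>w. (Inl u, w) \<in> A \<and> (Inl v, w) \<in> A)"
    using uv phylogeny_digraph_arc_vertices(2)[OF pd] unfolding phylo_adj_def by blast
  finally show ?thesis .
qed

lemma phylogeny_digraph_arc_edge:
  assumes pd: "phylogeny_digraph V E S A" and a: "(Inl x, Inl y) \<in> A"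
  shows "{x, y} \<in> E"
proof -
  have "x \<in> V" "y \<in> V" using phylogeny_digraph_arc_vertices[OF pd a] by auto
  moreover have "x \<noteq> y" using phylogeny_digraph_no_loop[OF pd] a by blast
  ultimately show ?thesis using phylogeny_digraph_adj_iff[OF pd] a by simp
qed

lemma phylogeny_digraph_common_out_edge:
  assumes pd: "phylogeny_digraph V E S A"
    and "(Inl x, w) \<in> A" and "(Inl y, w) \<in> A" and "x \<noteq> y"
  shows "{x, y} \<in> E"
proof -
  have "x \<in> V" "y \<in> V" using phylogeny_digraph_arc_vertices(1)[OF pd] assms(2,3) by auto
  then show ?thesis using phylogeny_digraph_adj_iff[OF pd _ _ \<open>x \<noteq> y\<close>] assms(2,3) by blast
qed

lemma phylogeny_digraph_exists:
  assumes g: "graph V E"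
  shows "\<exists>S A. phylogeny_digraph V E S A"
proof -
  have "E \<subseteq> Pow V" and "finite V" using g unfolding graph_def by auto
  then have "finite E" by (simp add: finite_subset)
  then obtain f where f: "bij_betw f {0..<card E} E" using ex_bij_betw_nat_finite by blast
  define S where "S = {0..<card E}"
  define A :: "('a + nat) rel" where "A = {(Inl u, Inr i) |u i. i \<in> S \<and> u \<in> f i}"
  have edge_f: "f i \<in> E" if "i \<in> S" for i
    using f that unfolding S_def bij_betw_def by blast
  have "A \<subseteq> (Inl ` V \<union> Inr ` S) \<times> (Inl ` V \<union> Inr ` S)"
    using \<open>E \<subseteq> Pow V\<close> edge_f unfolding A_def by blast
  moreover have "acyclic A"
  proof -
    have "trans A" unfolding A_def trans_def by blast
    then show ?thesis unfolding acyclic_def A_def by simp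
  qed
  moreover have "{u, v} \<in> E \<longleftrightarrow> phylo_adj (Inl ` V \<union> Inr ` S) A (Inl u) (Inl v)"
    if uv: "u \<in> V" "v \<in> V" "u \<noteq> v" for u v
  proof
    assume "{u, v} \<in> E"
    then have "{u, v} \<in> f ` S" using f unfolding S_def bij_betw_def by simp
    then obtain i where "i \<in> S" "f i = {u, v}" by blast
    then show "phylo_adj (Inl ` V \<union> Inr ` S) A (Inl u) (Inl v)"
      unfolding phylo_adj_def A_def using uv by blast
  next
    assume "phylo_adj (Inl ` V \<union> Inr ` S) A (Inl u) (Inl v)"
    then obtain i where i: "i \<in> S" "u \<in> f i" "v \<in> f i"
      unfolding phylo_adj_def A_def by blast
    moreover obtain x y where "f i = {x, y}" using g edge_f[OF i(1)] unfolding graph_def by blast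
    ultimately have "f i = {u, v}" using uv(3) by auto
    then show "{u, v} \<in> E" using edge_f[OF i(1)] by simp
  qed
  ultimately have "phylogeny_digraph V E S A"
    unfolding phylogeny_digraph_def S_def A_def by auto
  then show ?thesis by blast
qed

lemma phylogeny_number_le:
  "phylogeny_digraph V E S A \<Longrightarrow> phylogeny_number V E \<le> card S"
  unfolding phylogeny_number_def by (blast intro: Least_le)

lemma phylogeny_number_attained:
  assumes "graph V E"
  obtains S A where "phylogeny_digraph V E S A" and "card S = phylogeny_number V E"
proof -
  have "\<exists>k S A. phylogeny_digraph V E S A \<and> card S = k"
    using phylogeny_digraph_exists[OF assms] by blast
  then have "\<exists>S A. phylogeny_digraph V E S A \<and> card S = phylogeny_number V E"
    unfolding phylogeny_number_def by (rule LeastI_ex)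
  with that show ?thesis by blast
qed

definition restrict_arcs :: "'a set \<Rightarrow> 'a set set \<Rightarrow> ('a + nat) rel \<Rightarrow> ('a + nat) rel" where
  "restrict_arcs VH EH A =
     {(Inl x, Inl y) |x y. (Inl x, Inl y) \<in> A \<and> {x, y} \<in> EH} \<union>
     {(Inl x, Inr s) |x s. (Inl x, Inr s) \<in> A \<and> x \<in> VH \<and>
        (\<forall>y. (Inl y, Inr s) \<in> A \<and> y \<noteq> x \<longrightarrow> {x, y} \<in> EH)}"

lemma restrict_arcs_subset: "restrict_arcs VH EH A \<subseteq> A"
  unfolding restrict_arcs_def by blast

context
  fixes VG VH :: "'a set" and EG EH :: "'a set set" and S :: "nat set" and A :: "('a + nat) rel"
  assumes sub: "subgraph VH EH VG EG"
    and tf: "triangle_free VH EH"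
    and mc: "\<forall>K. maximal_clique VH EH K \<longrightarrow> maximal_clique VG EG K"
    and pd: "phylogeny_digraph VG EG S A"
begin

private lemma H_graph: "graph VH EH" and H_edges_subset: "EH \<subseteq> EG"
  using sub unfolding subgraph_def by auto

private lemma no_common_neighbour:
  "{a, b} \<in> EH \<Longrightarrow> c \<in> VG \<Longrightarrow> {a, c} \<in> EG \<Longrightarrow> {b, c} \<in> EG \<Longrightarrow> c = a \<or> c = b"
  using edge_no_common_neighbour[OF sub tf mc] by blast

lemma restrict_arcs_vertices:
  "restrict_arcs VH EH A \<subseteq> (Inl ` VH \<union> Inr ` S) \<times> (Inl ` VH \<union> Inr ` S)"
  using graph_edge_vertices[OF H_graph] phylogeny_digraph_arc_vertices[OF pd]
  unfolding restrict_arcs_def by blast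

text \<open>By \<open>no_common_neighbour\<close>, \<open>u\<close> and \<open>v\<close> are the only in-neighbours of \<open>s\<close>.\<close>
lemma restrict_arcs_keeps_new_out_neighbour:
  assumes uv: "{u, v} \<in> EH" and "(Inl u, Inr s) \<in> A" and "(Inl v, Inr s) \<in> A"
  shows "(Inl u, Inr s) \<in> restrict_arcs VH EH A"
proof -
  have "{u, y} \<in> EH" if y: "(Inl y, Inr s) \<in> A" "y \<noteq> u" for y
  proof (cases "y = v")
    case False
    have "y \<in> VG" using phylogeny_digraph_arc_vertices(1)[OF pd y(1)] by auto
    moreover have "{u, y} \<in> EG" "{v, y} \<in> EG"
      using phylogeny_digraph_common_out_edge[OF pd] assms(2,3) y False by auto
    ultimately show ?thesis using no_common_neighbour[OF uv] y(2) False by blast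
  qed (use uv in simp)
  then show ?thesis
    using assms graph_edge_vertices[OF H_graph uv] unfolding restrict_arcs_def by blast
qed

lemma edge_imp_restricted_adj:
  assumes uv: "{u, v} \<in> EH" "u \<noteq> v"
  shows "(Inl u, Inl v) \<in> restrict_arcs VH EH A \<or> (Inl v, Inl u) \<in> restrict_arcs VH EH A \<or>
         (\<exists>w. (Inl u, w) \<in> restrict_arcs VH EH A \<and> (Inl v, w) \<in> restrict_arcs VH EH A)"
proof -
  have vu: "{v, u} \<in> EH" using uv by (simp add: insert_commute)
  have "u \<in> VG" "v \<in> VG" using graph_edge_vertices[OF H_graph uv(1)] sub unfolding subgraph_def by auto
  then consider "(Inl u, Inl v) \<in> A" | "(Inl v, Inl u) \<in> A"
    | w where "(Inl u, w) \<in> A" "(Inl v, w) \<in> A"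
    using phylogeny_digraph_adj_iff[OF pd] uv H_edges_subset by blast
  then show ?thesis
  proof cases
    case (3 w)
    show ?thesis
    proof (cases w)
      case (Inl z)
      have "z \<in> VG" using phylogeny_digraph_arc_vertices(2)[OF pd 3(1)] Inl by auto
      moreover have "z \<noteq> u" "z \<noteq> v" using phylogeny_digraph_no_loop[OF pd] 3 Inl by auto
      moreover have "{u, z} \<in> EG" "{v, z} \<in> EG"
        using phylogeny_digraph_arc_edge[OF pd] 3 Inl by auto
      ultimately show ?thesis using no_common_neighbour[OF uv(1)] by blast
    next
      case (Inr s)
      then show ?thesis
        using restrict_arcs_keeps_new_out_neighbour[OF uv(1)]
          restrict_arcs_keeps_new_out_neighbour[OF vu] 3 by blast
    qed
  qed (use uv vu in \<open>auto simp: restrict_arcs_def\<close>)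
qed

lemma restricted_adj_imp_edge:
  assumes "u \<noteq> v"
    and adj: "(Inl u, Inl v) \<in> restrict_arcs VH EH A \<or> (Inl v, Inl u) \<in> restrict_arcs VH EH A \<or>
         (\<exists>w. (Inl u, w) \<in> restrict_arcs VH EH A \<and> (Inl v, w) \<in> restrict_arcs VH EH A)"
  shows "{u, v} \<in> EH"
proof -
  consider "(Inl u, Inl v) \<in> restrict_arcs VH EH A" | "(Inl v, Inl u) \<in> restrict_arcs VH EH A"
    | z where "(Inl u, Inl z) \<in> restrict_arcs VH EH A" "(Inl v, Inl z) \<in> restrict_arcs VH EH A"
    | s where "(Inl u, Inr s) \<in> restrict_arcs VH EH A" "(Inl v, Inr s) \<in> restrict_arcs VH EH A"
    using adj by (metis sum.exhaust)
  then show ?thesis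
  proof cases
    case 3
    then have uz: "{u, z} \<in> EH" and arcs: "(Inl u, Inl z) \<in> A" "(Inl v, Inl z) \<in> A"
      unfolding restrict_arcs_def by auto
    have "v \<in> VG" using phylogeny_digraph_arc_vertices(1)[OF pd arcs(2)] by auto
    moreover have "v \<noteq> z" using phylogeny_digraph_no_loop[OF pd] arcs(2) by blast
    moreover have "{u, v} \<in> EG" "{z, v} \<in> EG"
      using phylogeny_digraph_common_out_edge[OF pd arcs \<open>u \<noteq> v\<close>]
        phylogeny_digraph_arc_edge[OF pd arcs(2)] by (auto simp: insert_commute)
    ultimately show ?thesis using no_common_neighbour[OF uz] \<open>u \<noteq> v\<close> by blast
  qed (use \<open>u \<noteq> v\<close> in \<open>auto simp: restrict_arcs_def insert_commute\<close>)
qed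

lemma phylogeny_digraph_restrict:
  "phylogeny_digraph VH EH S (restrict_arcs VH EH A)"
  unfolding phylogeny_digraph_def
proof (intro conjI ballI impI)
  show "finite S" using pd unfolding phylogeny_digraph_def by blast
  show "acyclic (restrict_arcs VH EH A)"
    using pd acyclic_subset[OF _ restrict_arcs_subset] unfolding phylogeny_digraph_def by blast
  show "restrict_arcs VH EH A \<subseteq> (Inl ` VH \<union> Inr ` S) \<times> (Inl ` VH \<union> Inr ` S)"
    by (rule restrict_arcs_vertices)
  show "(Inr s, Inl v) \<notin> restrict_arcs VH EH A" for s v
    unfolding restrict_arcs_def by blast
  fix u v assume uv: "u \<in> VH" "v \<in> VH" "u \<noteq> v"
  have "Inl u \<in> Inl ` VH \<union> Inr ` S" "Inl v \<in> Inl ` VH \<union> Inr ` S" using uv by auto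
  then show "{u, v} \<in> EH \<longleftrightarrow>
      phylo_adj (Inl ` VH \<union> Inr ` S) (restrict_arcs VH EH A) (Inl u) (Inl v)"
    using uv(3) edge_imp_restricted_adj[of u v] restricted_adj_imp_edge[of u v]
      restrict_arcs_vertices unfolding phylo_adj_def by blast
qed

end

theorem mainTheorem3:
  fixes VG VH :: "'a set" and EG EH :: "'a set set"
  assumes "graph VG EG"
    and "subgraph VH EH VG EG"
    and "triangle_free VH EH"
    and "\<forall>K. maximal_clique VH EH K \<longrightarrow> maximal_clique VG EG K"
  shows "phylogeny_number VG EG \<ge> phylogeny_number VH EH"
proof -
  obtain S A where pd: "phylogeny_digraph VG EG S A" and "card S = phylogeny_number VG EG"
    using phylogeny_number_attained[OF assms(1)] .
  moreover have "phylogeny_digraph VH EH S (restrict_arcs VH EH A)"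
    using phylogeny_digraph_restrict[OF assms(2-4) pd] .
  ultimately show ?thesis using phylogeny_number_le by metis
qed

end
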